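(* Let $P=\langle p_1,\dots,p_n\rangle$ be a set of points in convex position with positive weights $w_1,\dots,w_n$. For any canonical triple $(i,j,k)$, including the case $k=0$, $$f(i,j,k)=\begin{cases}\max_{p_l\in P_k(i,j)}\bigl(f(i,l,j)+f(l,j,i)+w_l\bigr), & \text{if } P_k(i,j)\neq\emptyset,\\ 0, & \text{otherwise.}\end{cases}$$
   Context: $P$ is in convex position (every point is a hull vertex), no three points collinear, no four cocircular, listed counterclockwise along the hull as the cyclic list $\langle p_1,\dots,p_n\rangle$; $P(i,j)$ denotes the points strictly between $p_i$ and $p_j$ when moving counterclockwise from $p_i$ to $p_j$. An independent set is a subset of $P$ whose pairwise Euclidean distances all exceed $1$. For three points $p,q,s$, $D(p,q,s)$ is the disk whose boundary circle passes through $p,q,s$. A canonical triple $(i,j,k)$ with $k\ne 0$ consists of indices such that $p_i,p_j,p_k$ are in counterclockwise order in $P$ and have pairwise distances greater than $1$; also $(i,j,0)$ is a canonical triple whenever $|p_ip_j|>1$, where $p_0$ is a dummy point and $D(p_i,p_j,p_0)$ is taken to be the halfplane to the left of the directed segment from $p_i$ to $p_j$. For a canonical triple, $P_k(i,j)=\{p\in P(i,j): p\notin D(p_i,p_j,p_k),\ |pp_i|>1,\ |pp_j|>1\}$, and $f(i,j,k)$ is the maximum total weight of a subset $P'\subseteq P(i,j)$ lying outside $D(p_i,p_j,p_k)$ such that $P'\cup\{p_i,p_j\}$ is an independent set (and $0$ if there is no nonempty such subset). *)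

theory Defs
  imports "HOL-Analysis.Analysis"
begin

text \<open>Points live in the Euclidean plane, modelled as \<open>complex\<close>.
  The point set is \<open>p 1, ..., p n\<close> (indices \<open>1..n\<close>); index 0 is the dummy point.\<close>

definition orient :: "complex \<Rightarrow> complex \<Rightarrow> complex \<Rightarrow> real" where
  "orient a b c = Im (cnj (b - a) * (c - a))"

definition cocircular4 :: "complex \<Rightarrow> complex \<Rightarrow> complex \<Rightarrow> complex \<Rightarrow> bool" where
  "cocircular4 a b c d \<longleftrightarrow> (\<exists>z r. dist a z = r \<and> dist b z = r \<and> dist c z = r \<and> dist d z = r)"

definition good_config :: "nat \<Rightarrow> (nat \<Rightarrow> complex) \<Rightarrow> bool" where
  "good_config n p \<longleftrightarrow>
     inj_on p {1..n} \<and>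
     (\<forall>m\<in>{1..n}. p m \<notin> convex hull (p ` ({1..n} - {m}))) \<and>
     (\<forall>a b c. 1 \<le> a \<and> a < b \<and> b < c \<and> c \<le> n \<longrightarrow> orient (p a) (p b) (p c) > 0) \<and>
     (\<forall>a\<in>{1..n}. \<forall>b\<in>{1..n}. \<forall>c\<in>{1..n}. distinct [a,b,c] \<longrightarrow> orient (p a) (p b) (p c) \<noteq> 0) \<and>
     (\<forall>a\<in>{1..n}. \<forall>b\<in>{1..n}. \<forall>c\<in>{1..n}. \<forall>d\<in>{1..n}. distinct [a,b,c,d] \<longrightarrow>
        \<not> cocircular4 (p a) (p b) (p c) (p d))"

definition cyc_ccw :: "nat \<Rightarrow> nat \<Rightarrow> nat \<Rightarrow> bool" where
  "cyc_ccw i j k \<longleftrightarrow> (i < j \<and> j < k) \<or> (j < k \<and> k < i) \<or> (k < i \<and> i < j)"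

definition between :: "nat \<Rightarrow> nat \<Rightarrow> nat \<Rightarrow> nat set" where
  "between n i j = {m \<in> {1..n}. if i < j then i < m \<and> m < j else (i < m \<or> m < j)}"

definition disk3 :: "complex \<Rightarrow> complex \<Rightarrow> complex \<Rightarrow> complex set" where
  "disk3 a b c = {x. \<exists>z r. dist a z = r \<and> dist b z = r \<and> dist c z = r \<and> dist x z \<le> r}"

text \<open>\<open>D(p_i,p_j,p_k)\<close>, with the convention for the dummy point \<open>k = 0\<close>:
  the halfplane to the left of the directed segment from \<open>p_i\<close> to \<open>p_j\<close>.\<close>
definition Dreg :: "(nat \<Rightarrow> complex) \<Rightarrow> nat \<Rightarrow> nat \<Rightarrow> nat \<Rightarrow> complex set" where
  "Dreg p i j k = (if k = 0 then {x. orient (p i) (p j) x > 0} else disk3 (p i) (p j) (p k))"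

definition canonical :: "nat \<Rightarrow> (nat \<Rightarrow> complex) \<Rightarrow> nat \<Rightarrow> nat \<Rightarrow> nat \<Rightarrow> bool" where
  "canonical n p i j k \<longleftrightarrow>
     i \<in> {1..n} \<and> j \<in> {1..n} \<and> dist (p i) (p j) > 1 \<and>
     (k \<noteq> 0 \<longrightarrow> k \<in> {1..n} \<and> cyc_ccw i j k \<and> dist (p j) (p k) > 1 \<and> dist (p i) (p k) > 1)"

definition indep :: "(nat \<Rightarrow> complex) \<Rightarrow> nat set \<Rightarrow> bool" where
  "indep p A \<longleftrightarrow> (\<forall>a\<in>A. \<forall>b\<in>A. p a \<noteq> p b \<longrightarrow> dist (p a) (p b) > 1)"

definition Pk :: "nat \<Rightarrow> (nat \<Rightarrow> complex) \<Rightarrow> nat \<Rightarrow> nat \<Rightarrow> nat \<Rightarrow> nat set" where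
  "Pk n p i j k = {l \<in> between n i j. p l \<notin> Dreg p i j k \<and> dist (p l) (p i) > 1 \<and> dist (p l) (p j) > 1}"

definition fopt :: "nat \<Rightarrow> (nat \<Rightarrow> complex) \<Rightarrow> (nat \<Rightarrow> real) \<Rightarrow> nat \<Rightarrow> nat \<Rightarrow> nat \<Rightarrow> real" where
  "fopt n p w i j k = Max {sum w S | S. S \<subseteq> between n i j \<and> (\<forall>l\<in>S. p l \<notin> Dreg p i j k)
                                    \<and> indep p (S \<union> {i, j})}"

end

theory Submission
  imports Defs
begin

text \<open>
  For \<open>l \<in> P_k(i,j)\<close>, optimal sets for \<open>(i,l,j)\<close> and \<open>(l,j,i)\<close> together with \<open>l\<close> form an
  admissible set for \<open>(i,j,k)\<close>. Their points lie outside the circle through \<open>p_i, p_l, p_j\<close>,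
  hence outside \<open>D(p_i,p_j,p_k)\<close>, because circles through \<open>p_i\<close> and \<open>p_j\<close> are nested on either
  side of the chord. Points on different sides of \<open>p_l\<close> are more than 1 apart by counting angles
  in convex quadrilaterals: a vertex outside the circle through the other three has an angle
  smaller than \<open>pi\<close> minus the opposite one, while an edge or diagonal of length at most 1 facing
  two longer sides subtends less than \<open>pi/3\<close>.
  Conversely, a nonempty optimal set \<open>S\<close> for \<open>(i,j,k)\<close> contains a point \<open>l\<close> whose circle through
  \<open>p_i, p_l, p_j\<close> has no other point of \<open>S\<close> inside (an extreme point for the pencil of circles
  through \<open>p_i\<close> and \<open>p_j\<close>), and \<open>S\<close> splits at \<open>l\<close> into admissible sets for \<open>(i,l,j)\<close> and \<open>(l,j,i)\<close>.
\<close>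


section \<open>Orientation and incircle determinants\<close>

lemma orient_coords:
  "orient a b c = (Re b - Re a) * (Im c - Im a) - (Im b - Im a) * (Re c - Re a)"
  by (simp add: orient_def algebra_simps)

lemma orient_rotate: "orient b c a = orient a b c"
  unfolding orient_coords by algebra

lemma orient_swap: "orient a c b = - orient a b c"
  unfolding orient_coords by algebra

lemma orient_nonzero_imp_distinct:
  "orient a b c \<noteq> 0 \<Longrightarrow> a \<noteq> b \<and> b \<noteq> c \<and> a \<noteq> c"
  unfolding orient_coords by auto

text \<open>The incircle determinant: for counterclockwise \<open>a, b, c\<close> it is positive inside their circle
  and negative outside.\<close>

definition incircle :: "complex \<Rightarrow> complex \<Rightarrow> complex \<Rightarrow> complex \<Rightarrow> real" where
  "incircle a b c d =
     (cmod (a - d))\<^sup>2 * orient d b c - (cmod (b - d))\<^sup>2 * orient d a c + (cmod (c - d))\<^sup>2 * orient d a b"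

lemmas incircle_coords = incircle_def orient_coords cmod_power2 minus_complex.sel

lemma incircle_rotate: "incircle b c a d = incircle a b c d"
  unfolding incircle_coords by algebra

lemma incircle_swap: "incircle a c b d = - incircle a b c d"
  unfolding incircle_coords by algebra

lemma incircle_pluecker:
  "orient a b c * incircle a b d x - orient a b d * incircle a b c x + orient a b x * incircle a b c d = 0"
  unfolding incircle_coords by algebra

lemma incircle_power:
  "incircle a b c x + orient a b c * ((cmod (x - z))\<^sup>2 - r) =
     ((cmod (a - z))\<^sup>2 - r) * orient b c x - ((cmod (b - z))\<^sup>2 - r) * orient a c x
       + ((cmod (c - z))\<^sup>2 - r) * orient a b x"
  unfolding incircle_coords by algebra

lemma incircle_on_circle:
  assumes "cmod (a - z) = r" "cmod (b - z) = r" "cmod (c - z) = r"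
  shows "incircle a b c x = - orient a b c * ((cmod (x - z))\<^sup>2 - r\<^sup>2)"
  using incircle_power[of a b c x z "r\<^sup>2"] assms by simp

lemma circumcenter_exists:
  assumes "orient a b c \<noteq> 0"
  obtains z where "cmod (b - z) = cmod (a - z)" "cmod (c - z) = cmod (a - z)"
proof -
  define d where "d = 2 * orient a b c"
  define s where "s x = (Re x)\<^sup>2 + (Im x)\<^sup>2" for x
  define z where "z = Complex
    ((s a * (Im b - Im c) + s b * (Im c - Im a) + s c * (Im a - Im b)) / d)
    ((s a * (Re c - Re b) + s b * (Re a - Re c) + s c * (Re b - Re a)) / d)"
  have "d \<noteq> 0" using assms by (simp add: d_def)
  then have "(cmod (b - z))\<^sup>2 = (cmod (a - z))\<^sup>2" "(cmod (c - z))\<^sup>2 = (cmod (a - z))\<^sup>2"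
    unfolding z_def d_def s_def orient_coords cmod_power2 by (simp_all add: field_simps) algebra+
  then show ?thesis using that by (simp add: power2_eq_iff_nonneg)
qed

lemma notin_disk3_iff:
  assumes "orient a b c > 0"
  shows "x \<notin> disk3 a b c \<longleftrightarrow> incircle a b c x < 0"
proof
  assume "incircle a b c x < 0"
  show "x \<notin> disk3 a b c"
  proof
    assume "x \<in> disk3 a b c"
    then obtain z r where "cmod (a - z) = r" "cmod (b - z) = r" "cmod (c - z) = r" "cmod (x - z) \<le> r"
      unfolding disk3_def dist_norm by blast
    then have "incircle a b c x = - orient a b c * ((cmod (x - z))\<^sup>2 - r\<^sup>2)"
      and "(cmod (x - z))\<^sup>2 \<le> r\<^sup>2"
      by (simp add: incircle_on_circle, simp add: power_mono)
    moreover from this(2) have "orient a b c * ((cmod (x - z))\<^sup>2 - r\<^sup>2) \<le> 0"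
      using assms by (simp add: mult_nonneg_nonpos)
    ultimately show False
      using \<open>incircle a b c x < 0\<close> by linarith
  qed
next
  assume x: "x \<notin> disk3 a b c"
  obtain z where z: "cmod (b - z) = cmod (a - z)" "cmod (c - z) = cmod (a - z)"
    using circumcenter_exists[of a b c] assms by auto
  with x have "\<not> dist x z \<le> dist a z"
    unfolding disk3_def dist_norm by blast
  then have "(cmod (a - z))\<^sup>2 < (cmod (x - z))\<^sup>2"
    by (simp add: dist_norm power_strict_mono)
  moreover have "incircle a b c x = - orient a b c * ((cmod (x - z))\<^sup>2 - (cmod (a - z))\<^sup>2)"
    using z by (simp add: incircle_on_circle)
  ultimately show "incircle a b c x < 0"
    using assms by simp
qed

lemma cocircular4_if_incircle_eq_0:
  assumes "orient a b c \<noteq> 0" "incircle a b c x = 0"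
  shows "cocircular4 a b c x"
proof -
  obtain z where z: "cmod (b - z) = cmod (a - z)" "cmod (c - z) = cmod (a - z)"
    using circumcenter_exists assms(1) by blast
  then have "incircle a b c x = - orient a b c * ((cmod (x - z))\<^sup>2 - (cmod (a - z))\<^sup>2)"
    by (simp add: incircle_on_circle)
  with assms have "cmod (x - z) = cmod (a - z)"
    by (simp add: power2_eq_iff_nonneg)
  with z show ?thesis
    unfolding cocircular4_def dist_norm by blast
qed

text \<open>On the side of \<open>ab\<close> away from \<open>c\<close>, the disk through \<open>a, l, b\<close> contains the disk through
  \<open>a, b, c\<close> as soon as \<open>l\<close> lies outside the latter.\<close>

lemma incircle_nested:
  assumes "orient a b c > 0" "orient a b l < 0" "orient a b x < 0"
    and "incircle a b c l < 0" "incircle a l b x < 0"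
  shows "incircle a b c x < 0"
proof -
  have "orient a b c * incircle a b l x > 0"
    using assms(1,5) incircle_swap[of a l b x] by simp
  moreover have "orient a b x * incircle a b c l > 0"
    using assms(3,4) by (simp add: mult_neg_neg)
  ultimately have "orient a b l * incircle a b c x > 0"
    using incircle_pluecker[of a b c l x] by linarith
  with assms(2) show ?thesis
    by (simp add: zero_less_mult_iff)
qed

text \<open>A real coordinate on the pencil of circles through \<open>a\<close> and \<open>b\<close>, normalised by an auxiliary
  point \<open>c\<close> off the line \<open>ab\<close>.\<close>

definition pencil_coord :: "complex \<Rightarrow> complex \<Rightarrow> complex \<Rightarrow> complex \<Rightarrow> real" where
  "pencil_coord a b c x = incircle a b c x / (orient a b c * orient a b x)"

lemma pencil_coord_diff:
  assumes "orient a b c \<noteq> 0" "orient a b l \<noteq> 0" "orient a b x \<noteq> 0"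
  shows "incircle a b l x / (orient a b l * orient a b x) = pencil_coord a b c x - pencil_coord a b c l"
  using assms incircle_pluecker[of a b c l x] unfolding pencil_coord_def
  by (simp add: field_simps)

lemma incircle_nonpos_if_pencil_coord_le:
  assumes "orient a b c \<noteq> 0" "orient a b l < 0" "orient a b x < 0"
    and "pencil_coord a b c l \<le> pencil_coord a b c x"
  shows "incircle a l b x \<le> 0"
proof -
  have "incircle a b l x / (orient a b l * orient a b x) \<ge> 0"
    using pencil_coord_diff[of a b c l x] assms by simp
  moreover have "orient a b l * orient a b x > 0"
    using assms(2,3) by (simp add: mult_neg_neg)
  ultimately have "incircle a b l x \<ge> 0"
    by (simp add: zero_le_divide_iff)
  then show ?thesis
    using incircle_swap[of a l b x] by simp
qed

section \<open>Angles\<close>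

text \<open>\<open>angle v a b\<close> is the angle at the vertex \<open>v\<close>, turning counterclockwise from \<open>b\<close> to \<open>a\<close>.\<close>

definition angle :: "complex \<Rightarrow> complex \<Rightarrow> complex \<Rightarrow> real" where
  "angle v a b = Arg ((a - v) / (b - v))"

lemma angle_bounds:
  assumes "orient a v b > 0"
  shows "0 < angle v a b" "angle v a b < pi"
proof -
  have "b \<noteq> v"
    using orient_nonzero_imp_distinct[of a v b] assms by auto
  then have "(Re (b - v))\<^sup>2 + (Im (b - v))\<^sup>2 > 0"
    by (simp add: complex_eq_iff sum_power2_gt_zero_iff)
  moreover have "Im ((a - v) / (b - v)) = orient a v b / ((Re (b - v))\<^sup>2 + (Im (b - v))\<^sup>2)"
    unfolding Im_divide orient_coords by (simp add: algebra_simps)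
  ultimately have "Im ((a - v) / (b - v)) > 0"
    using assms by simp
  then show "0 < angle v a b" "angle v a b < pi"
    unfolding angle_def using Arg_lt_pi by blast+
qed

lemma angle_quotient_nonzero: "orient a v b \<noteq> 0 \<Longrightarrow> (a - v) / (b - v) \<noteq> 0"
  using orient_nonzero_imp_distinct[of a v b] by auto

lemma angle_add:
  assumes "orient a v m > 0" "orient m v b > 0" "orient a v b > 0"
  shows "angle v a b = angle v a m + angle v m b"
proof -
  have "m \<noteq> v"
    using orient_nonzero_imp_distinct[of m v b] assms(2) by auto
  then have "(a - v) / (b - v) = ((a - v) / (m - v)) * ((m - v) / (b - v))"
    by simp
  moreover have nz: "(a - v) / (m - v) \<noteq> 0" "(m - v) / (b - v) \<noteq> 0"
    using angle_quotient_nonzero[of a v m] angle_quotient_nonzero[of m v b] assms by simp_all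
  ultimately show ?thesis
    using Arg_times'[OF nz] angle_bounds[OF assms(1)] angle_bounds[OF assms(2)] angle_bounds[OF assms(3)]
    unfolding angle_def by (auto split: if_splits)
qed

lemma angle_triangle_sum:
  assumes "orient a b c > 0"
  shows "angle a c b + angle b a c + angle c b a = pi"
proof -
  have o: "orient c a b > 0" "orient a b c > 0" "orient b c a > 0"
    using assms by (auto simp: orient_rotate)
  have "a \<noteq> b" "b \<noteq> c" "a \<noteq> c"
    using assms unfolding orient_coords by auto
  then have nz: "(c - a) / (b - a) \<noteq> 0" "(a - b) / (c - b) \<noteq> 0" "(b - c) / (a - c) \<noteq> 0"
    "((c - a) / (b - a)) * ((a - b) / (c - b)) \<noteq> 0"
    by auto
  have "((c - a) / (b - a)) * ((a - b) / (c - b)) * ((b - c) / (a - c))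
      = ((c - a) * (a - b) * (b - c)) / ((b - a) * (c - b) * (a - c))"
    by simp
  also have "(c - a) * (a - b) * (b - c) = - ((b - a) * (c - b) * (a - c))"
    by (simp add: algebra_simps)
  finally have prod: "((c - a) / (b - a)) * ((a - b) / (c - b)) * ((b - c) / (a - c)) = -1"
    using nz by simp
  have "Arg (-1) = pi"
    using Arg_of_real[of "-1"] by simp
  then show ?thesis
    using Arg_times'[OF nz(1,2)] Arg_times'[OF nz(4,3)] prod
      angle_bounds[OF o(1)] angle_bounds[OF o(2)] angle_bounds[OF o(3)]
    unfolding angle_def by (auto split: if_splits)
qed

lemma angle_quadrilateral_sum:
  assumes "orient a b c > 0" "orient a c d > 0" "orient a b d > 0" "orient b c d > 0"
  shows "angle a d b + angle b a c + angle c b d + angle d c a = 2 * pi"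
proof -
  have "angle a d b = angle a d c + angle a c b"
    by (rule angle_add) (use assms in \<open>simp_all add: orient_rotate\<close>)
  moreover have "angle c b d = angle c b a + angle c a d"
    by (rule angle_add) (use assms in \<open>simp_all add: orient_rotate\<close>)
  ultimately show ?thesis
    using angle_triangle_sum[OF assms(1)] angle_triangle_sum[OF assms(2)] by simp
qed

lemma angle_lt_pi_div_3:
  assumes "orient a v b > 0" "dist a v > 1" "dist b v > 1" "dist a b \<le> 1"
  shows "angle v a b < pi / 3"
proof -
  define A B D where "A = cmod (a - v)" and "B = cmod (b - v)" and "D = Re ((a - v) * cnj (b - v))"
  have "A > 1" "B > 1"
    using assms by (simp_all add: A_def B_def dist_norm)
  have "(cmod (a - b))\<^sup>2 = A\<^sup>2 + B\<^sup>2 - 2 * D"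
    unfolding A_def B_def D_def cmod_power2 by (simp add: algebra_simps power2_eq_square)
  moreover have "(cmod (a - b))\<^sup>2 \<le> 1"
    using assms(4) by (simp add: dist_norm power_le_one)
  moreover have "A * B > 1"
    using \<open>A > 1\<close> \<open>B > 1\<close> less_1_mult by blast
  moreover have "(A - B)\<^sup>2 \<ge> 0"
    by simp
  ultimately have "2 * D > A * B"
    by (simp add: power2_eq_square algebra_simps)
  have "cos (angle v a b) = D / (A * B)"
  proof -
    have "(a - v) / (b - v) \<noteq> 0"
      by (rule angle_quotient_nonzero) (use assms(1) in simp)
    then have "cos (angle v a b) = Re ((a - v) / (b - v)) / cmod ((a - v) / (b - v))"
      unfolding angle_def by (rule cos_Arg)
    moreover have "Re ((a - v) / (b - v)) = D / B\<^sup>2"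
      unfolding D_def B_def Re_divide cmod_power2 by (simp add: algebra_simps)
    moreover have "cmod ((a - v) / (b - v)) = A / B"
      unfolding A_def B_def by (simp add: norm_divide)
    ultimately show ?thesis
      using \<open>B > 1\<close> by (simp add: field_simps power2_eq_square)
  qed
  moreover have "D / (A * B) > 1 / 2"
    using \<open>2 * D > A * B\<close> \<open>A > 1\<close> \<open>B > 1\<close> by (simp add: field_simps)
  ultimately have "cos (angle v a b) > cos (pi / 3)"
    by (simp add: cos_60)
  then show ?thesis
    using angle_bounds[OF assms(1)] cos_mono_le_eq[of "angle v a b" "pi / 3"] by auto
qed

text \<open>The inscribed angle theorem as an inequality: opposite angles of the quadrilateral
  \<open>a x l c\<close> sum to less than \<open>pi\<close> when \<open>x\<close> lies outside the circle through \<open>a, l, c\<close>.\<close>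

lemma opposite_angles_lt_pi:
  assumes "orient a x l > 0" "orient a l c > 0" "incircle a l c x < 0"
  shows "angle x a l + angle c l a < pi"
proof -
  have o: "orient l c a > 0"
    using assms(2) by (simp add: orient_rotate)
  define N W where "N = (a - x) * (l - c)" and "W = (l - x) * (a - c)"
  have "l \<noteq> x" "a \<noteq> c"
    using orient_nonzero_imp_distinct[of a x l] orient_nonzero_imp_distinct[of a l c] assms(1,2) by auto
  then have "W \<noteq> 0"
    unfolding W_def by simp
  then have "(Re W)\<^sup>2 + (Im W)\<^sup>2 > 0"
    by (simp add: complex_eq_iff sum_power2_gt_zero_iff)
  moreover have "Im (N * cnj W) = - incircle a l c x"
    unfolding N_def W_def incircle_coords by simp algebra
  ultimately have "Im (N / W) > 0"
    using assms(3) unfolding Im_divide by (simp add: algebra_simps)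
  then have "0 < Arg (N / W)" "Arg (N / W) < pi"
    using Arg_lt_pi by blast+
  moreover have "(a - x) / (l - x) * ((l - c) / (a - c)) = N / W"
    unfolding N_def W_def by simp
  moreover have nz: "(a - x) / (l - x) \<noteq> 0" "(l - c) / (a - c) \<noteq> 0"
    using angle_quotient_nonzero[of a x l] angle_quotient_nonzero[of l c a] assms(1) o by simp_all
  ultimately show ?thesis
    using Arg_times'[OF nz] angle_bounds[OF assms(1)] angle_bounds[OF o]
    unfolding angle_def by (auto split: if_splits)
qed

text \<open>In a convex quadrilateral \<open>a x b c\<close> the angles at \<open>x\<close> and \<open>c\<close> sum to less than \<open>pi\<close>,
  so the angles at \<open>a\<close> and \<open>b\<close> sum to more than \<open>pi\<close>; a diagonal of length at most 1
  would force both of them below \<open>pi/3\<close>.\<close>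

lemma outside_circle_far_from_opposite:
  assumes o: "orient a x b > 0" "orient a x c > 0" "orient a b c > 0" "orient x b c > 0"
    and out: "incircle a b c x < 0"
    and d: "dist x a > 1" "dist x b > 1" "dist a c > 1" "dist b c > 1"
  shows "dist x c > 1"
proof (rule ccontr)
  assume "\<not> dist x c > 1"
  then have dxc: "dist x c \<le> 1"
    by simp
  have "angle a c x < pi / 3"
    by (rule angle_lt_pi_div_3; metis o d dxc orient_rotate dist_commute)
  moreover have "angle b x c < pi / 3"
    by (rule angle_lt_pi_div_3; metis o d dxc orient_rotate dist_commute)
  moreover have "angle x a b + angle c b a < pi"
    by (rule opposite_angles_lt_pi[OF o(1) o(3) out])
  moreover have "angle a c x + angle x a b + angle b x c + angle c b a = 2 * pi"
    by (rule angle_quadrilateral_sum) (use o in auto)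
  ultimately show False
    using pi_gt_zero by linarith
qed

text \<open>The same count in the quadrilateral \<open>a x b y\<close>: by the inscribed angle bounds, the angles at
  \<open>x\<close> and \<open>y\<close> sum to less than \<open>pi\<close> plus the angle of \<open>a b c\<close> at \<open>b\<close>, which is part of the angle
  at \<open>b\<close>; a short \<open>xy\<close> would put the angles at \<open>a\<close> and \<open>b\<close> below \<open>pi/3\<close>.\<close>

lemma outside_circle_far_across:
  assumes o: "orient a x b > 0" "orient a b y > 0" "orient a x y > 0" "orient x b y > 0"
      "orient a b c > 0" "orient a y c > 0" "orient b y c > 0"
    and out: "incircle a b c x < 0" "incircle a b c y < 0"
    and d: "dist x a > 1" "dist x b > 1" "dist y a > 1" "dist y b > 1"
  shows "dist x y > 1"
proof (rule ccontr)
  assume "\<not> dist x y > 1"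
  then have dxy: "dist x y \<le> 1"
    by simp
  have "angle a y x < pi / 3"
    by (rule angle_lt_pi_div_3; metis o d dxy orient_rotate dist_commute)
  moreover have "angle b x y < pi / 3"
    by (rule angle_lt_pi_div_3; metis o d dxy orient_rotate dist_commute)
  moreover have "angle a y x + angle x a b + angle b x y + angle y b a = 2 * pi"
    by (rule angle_quadrilateral_sum) (use o in auto)
  moreover have "angle x a b + angle c b a < pi"
    by (rule opposite_angles_lt_pi[OF o(1) o(5) out(1)])
  moreover have "angle y b c + angle a c b < pi"
    by (rule opposite_angles_lt_pi; metis o out orient_rotate incircle_rotate)
  moreover have "angle a c b + angle b a c + angle c b a = pi"
    by (rule angle_triangle_sum[OF o(5)])
  moreover have "angle y b c = angle y b a + angle y a c"
    by (rule angle_add; metis o orient_rotate)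
  moreover have "angle b x y = angle b x a + angle b a y"
    by (rule angle_add; metis o orient_rotate)
  moreover have "angle b a y = angle b a c + angle b c y"
    by (rule angle_add; metis o orient_rotate)
  moreover have "angle y a c > 0" "angle b x a > 0" "angle b c y > 0"
    by (rule angle_bounds; metis o orient_rotate)+
  ultimately show False
    using pi_gt_zero by linarith
qed

section \<open>Admissible sets\<close>

lemma between_iff: "i \<noteq> j \<Longrightarrow> m \<in> between n i j \<longleftrightarrow> m \<in> {1..n} \<and> cyc_ccw i m j"
  unfolding between_def cyc_ccw_def by auto

lemma between_subset: "between n i j \<subseteq> {1..n}"
  unfolding between_def by auto

lemma between_split:
  assumes "l \<in> {1..n}" "cyc_ccw i l j"
  shows "between n i j = between n i l \<union> between n l j \<union> {l}"
  using assms unfolding between_def cyc_ccw_def by auto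

lemma between_disjoint:
  assumes "cyc_ccw i l j"
  shows "between n i l \<inter> between n l j = {}" "l \<notin> between n i l" "l \<notin> between n l j"
  using assms unfolding between_def cyc_ccw_def by auto

lemma sum_between_split:
  assumes "S1 \<subseteq> between n i l" "S2 \<subseteq> between n l j" "cyc_ccw i l j"
  shows "sum w (S1 \<union> S2 \<union> {l}) = sum w S1 + sum w S2 + w l"
proof -
  have "finite S1" "finite S2"
    using assms(1,2) between_subset finite_subset by (metis finite_atLeastAtMost)+
  moreover have "S1 \<inter> S2 = {}" "l \<notin> S1 \<union> S2"
    using assms between_disjoint[of i l j n] by blast+
  ultimately show ?thesis
    by (simp add: sum.union_disjoint ac_simps)
qed

lemma indep_subset: "indep p B \<Longrightarrow> A \<subseteq> B \<Longrightarrow> indep p A"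
  unfolding indep_def by blast

lemma indep_Un:
  assumes "indep p A" "indep p B" "\<And>a b. a \<in> A - B \<Longrightarrow> b \<in> B - A \<Longrightarrow> dist (p a) (p b) > 1"
  shows "indep p (A \<union> B)"
  using assms unfolding indep_def by (metis Diff_iff Un_iff dist_commute)

lemma notin_Dreg_iff:
  assumes "c \<noteq> 0" "orient (p a) (p b) (p c) > 0"
  shows "x \<notin> Dreg p a b c \<longleftrightarrow> incircle (p a) (p b) (p c) x < 0"
  using assms notin_disk3_iff unfolding Dreg_def by simp

definition admissible :: "nat \<Rightarrow> (nat \<Rightarrow> complex) \<Rightarrow> nat \<Rightarrow> nat \<Rightarrow> nat \<Rightarrow> nat set \<Rightarrow> bool" where
  "admissible n p i j k S \<longleftrightarrow>
     S \<subseteq> between n i j \<and> (\<forall>l\<in>S. p l \<notin> Dreg p i j k) \<and> indep p (S \<union> {i, j})"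

lemma fopt_eq_Max: "fopt n p w i j k = Max (sum w ` Collect (admissible n p i j k))"
  unfolding fopt_def admissible_def by (simp add: setcompr_eq_image)

lemma finite_admissible: "finite (Collect (admissible n p i j k))"
proof (rule finite_subset)
  show "Collect (admissible n p i j k) \<subseteq> Pow (between n i j)"
    unfolding admissible_def by auto
  show "finite (Pow (between n i j))"
    using between_subset finite_subset by (metis finite_Pow_iff finite_atLeastAtMost)
qed

lemma admissible_empty: "dist (p i) (p j) > 1 \<Longrightarrow> admissible n p i j k {}"
  unfolding admissible_def indep_def by (auto simp: dist_commute)

lemma sum_le_fopt:
  "dist (p i) (p j) > 1 \<Longrightarrow> admissible n p i j k S \<Longrightarrow> sum w S \<le> fopt n p w i j k"
  unfolding fopt_eq_Max by (rule Max_ge) (use finite_admissible in auto)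

lemma fopt_attained:
  assumes "dist (p i) (p j) > 1"
  obtains S where "admissible n p i j k S" "fopt n p w i j k = sum w S"
proof -
  have "fopt n p w i j k \<in> sum w ` Collect (admissible n p i j k)"
    unfolding fopt_eq_Max
    using finite_admissible[of n p i j k] admissible_empty[OF assms, of n k] by (intro Max_in) auto
  then show ?thesis
    using that by auto
qed

lemma fopt_nonneg: "dist (p i) (p j) > 1 \<Longrightarrow> fopt n p w i j k \<ge> 0"
  using sum_le_fopt[OF _ admissible_empty] by fastforce

section \<open>Points in convex position\<close>

locale convex_config =
  fixes n :: nat and p :: "nat \<Rightarrow> complex"
  assumes good: "good_config n p"
begin

lemma orient_pos:
  assumes "a \<in> {1..n}" "b \<in> {1..n}" "c \<in> {1..n}" "cyc_ccw a b c"
  shows "orient (p a) (p b) (p c) > 0"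
proof -
  have sorted: "orient (p a) (p b) (p c) > 0" if "1 \<le> a" "a < b" "b < c" "c \<le> n" for a b c
    using good that unfolding good_config_def by blast
  from assms(4) consider "a < b \<and> b < c" | "b < c \<and> c < a" | "c < a \<and> a < b"
    unfolding cyc_ccw_def by blast
  then show ?thesis
    using sorted[of a b c] sorted[of b c a] sorted[of c a b] assms(1-3)
    by cases (auto simp: orient_rotate)
qed

lemma orient_neg:
  assumes "a \<in> {1..n}" "b \<in> {1..n}" "c \<in> {1..n}" "cyc_ccw a b c"
  shows "orient (p a) (p c) (p b) < 0"
  using orient_pos[OF assms] orient_swap[of "p a" "p c" "p b"] by simp

lemma indep_dist:
  assumes "indep p A" "A \<subseteq> {1..n}" "a \<in> A" "b \<in> A" "a \<noteq> b"
  shows "dist (p a) (p b) > 1"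
  using assms good unfolding indep_def good_config_def inj_on_def by blast

lemma not_cocircular:
  assumes "{a, b, c, d} \<subseteq> {1..n}" "distinct [a, b, c, d]"
  shows "\<not> cocircular4 (p a) (p b) (p c) (p d)"
  using assms good unfolding good_config_def by auto

lemma exists_empty_circle:
  assumes "a \<in> {1..n}" "b \<in> {1..n}" "a \<noteq> b" "S \<subseteq> between n a b" "S \<noteq> {}"
  obtains l where "l \<in> S" "\<And>m. m \<in> S \<Longrightarrow> m \<noteq> l \<Longrightarrow> incircle (p a) (p l) (p b) (p m) < 0"
proof -
  define c where "c = p a + \<i> * (p b - p a)"
  have "p a \<noteq> p b"
    using assms(1-3) good unfolding good_config_def inj_on_def by blast
  moreover have "orient (p a) (p b) c = (cmod (p b - p a))\<^sup>2"
    unfolding orient_coords c_def cmod_power2 by (simp add: power2_eq_square algebra_simps)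
  ultimately have oc: "orient (p a) (p b) c \<noteq> 0"
    by simp
  define g where "g m = pencil_coord (p a) (p b) c (p m)" for m
  have "finite S"
    using assms(4) between_subset finite_subset by (metis finite_atLeastAtMost)
  define l where "l = arg_min_on g S"
  have l: "l \<in> S"
    unfolding l_def using arg_min_if_finite(1)[OF \<open>finite S\<close> assms(5)] .
  have l_min: "g l \<le> g m" if "m \<in> S" for m
    unfolding l_def using arg_min_least[OF \<open>finite S\<close> assms(5) that] .
  show thesis
  proof (rule that)
    show "l \<in> S"
      by (rule l)
    fix m
    assume m: "m \<in> S" "m \<noteq> l"
    have lm: "l \<in> {1..n}" "cyc_ccw a l b" "m \<in> {1..n}" "cyc_ccw a m b"
      using assms(3,4) \<open>l \<in> S\<close> m(1) between_iff by blast+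
    have "distinct [a, l, b, m]"
      using lm m(2) unfolding cyc_ccw_def by auto
    then have "\<not> cocircular4 (p a) (p l) (p b) (p m)"
      using not_cocircular assms(1,2) lm by auto
    moreover have "orient (p a) (p l) (p b) \<noteq> 0"
      using orient_pos[OF assms(1) lm(1) assms(2) lm(2)] by simp
    ultimately have "incircle (p a) (p l) (p b) (p m) \<noteq> 0"
      using cocircular4_if_incircle_eq_0 by blast
    moreover have "incircle (p a) (p l) (p b) (p m) \<le> 0"
      using incircle_nonpos_if_pencil_coord_le[OF oc] orient_neg assms(1,2) lm l_min[OF m(1)]
      unfolding g_def by blast
    ultimately show "incircle (p a) (p l) (p b) (p m) < 0"
      by linarith
  qed
qed

lemma far_from_opposite_vertex:
  assumes "{a, b, c, x} \<subseteq> {1..n}" "cyc_ccw a x b" "cyc_ccw a b c"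
    and "incircle (p a) (p b) (p c) (p x) < 0"
    and "dist (p x) (p a) > 1" "dist (p x) (p b) > 1" "dist (p a) (p c) > 1" "dist (p b) (p c) > 1"
  shows "dist (p x) (p c) > 1"
proof -
  have "cyc_ccw a x c" "cyc_ccw x b c"
    using assms(2,3) unfolding cyc_ccw_def by auto
  with assms(1-3) have o: "orient (p a) (p x) (p b) > 0" "orient (p a) (p x) (p c) > 0"
    "orient (p a) (p b) (p c) > 0" "orient (p x) (p b) (p c) > 0"
    by (simp_all add: orient_pos)
  from o assms(4-) show ?thesis
    by (rule outside_circle_far_from_opposite)
qed

lemma far_across_vertex:
  assumes "{a, b, c, x, y} \<subseteq> {1..n}" "cyc_ccw a x b" "cyc_ccw b y c" "cyc_ccw a b c"
    and "incircle (p a) (p b) (p c) (p x) < 0" "incircle (p a) (p b) (p c) (p y) < 0"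
    and "dist (p x) (p a) > 1" "dist (p x) (p b) > 1" "dist (p y) (p a) > 1" "dist (p y) (p b) > 1"
  shows "dist (p x) (p y) > 1"
proof -
  have "cyc_ccw a b y" "cyc_ccw a x y" "cyc_ccw x b y" "cyc_ccw a y c"
    using assms(2-4) unfolding cyc_ccw_def by auto
  with assms(1-4) have o: "orient (p a) (p x) (p b) > 0" "orient (p a) (p b) (p y) > 0"
    "orient (p a) (p x) (p y) > 0" "orient (p x) (p b) (p y) > 0" "orient (p a) (p b) (p c) > 0"
    "orient (p a) (p y) (p c) > 0" "orient (p b) (p y) (p c) > 0"
    by (simp_all add: orient_pos)
  from o assms(5-) show ?thesis
    by (rule outside_circle_far_across)
qed

lemma admissible_memberD:
  assumes "admissible n p a b c S" "x \<in> S" "{a, b, c} \<subseteq> {1..n}" "cyc_ccw a b c"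
  shows "x \<in> {1..n}" "cyc_ccw a x b" "incircle (p a) (p b) (p c) (p x) < 0"
    and "dist (p x) (p a) > 1" "dist (p x) (p b) > 1"
proof -
  have "a \<noteq> b"
    using assms(4) unfolding cyc_ccw_def by auto
  then show x: "x \<in> {1..n}" "cyc_ccw a x b"
    using assms(1,2) between_iff unfolding admissible_def by blast+
  have "c \<noteq> 0" "orient (p a) (p b) (p c) > 0"
    using assms(3,4) orient_pos by auto
  then show "incircle (p a) (p b) (p c) (p x) < 0"
    using assms(1,2) notin_Dreg_iff unfolding admissible_def by blast
  have "x \<noteq> a" "x \<noteq> b"
    using x(2) unfolding cyc_ccw_def by auto
  moreover have "S \<union> {a, b} \<subseteq> {1..n}"
    using assms(1,3) between_subset unfolding admissible_def by blast
  ultimately show "dist (p x) (p a) > 1" "dist (p x) (p b) > 1"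
    using assms(1,2) indep_dist[of "S \<union> {a, b}"] unfolding admissible_def by auto
qed

end

section \<open>Canonical triples\<close>

locale canonical_triple = convex_config +
  fixes i j k :: nat
  assumes canonical: "canonical n p i j k"
begin

lemma i_in: "i \<in> {1..n}" and j_in: "j \<in> {1..n}" and dist_i_j: "dist (p i) (p j) > 1"
  using canonical unfolding canonical_def by auto

lemma i_neq_j: "i \<noteq> j"
  using dist_i_j by auto

lemma finite_Pk: "finite (Pk n p i j k)"
  by (rule finite_subset[of _ "{1..n}"]) (auto simp: Pk_def between_def)

lemma Pk_memberD:
  assumes "l \<in> Pk n p i j k"
  shows "l \<in> {1..n}" "cyc_ccw i l j" "p l \<notin> Dreg p i j k"
    and "dist (p i) (p l) > 1" "dist (p l) (p j) > 1"
  using assms between_iff[OF i_neq_j] unfolding Pk_def by (auto simp: dist_commute)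

lemma notin_Dreg_if_outside_circle:
  assumes "l \<in> Pk n p i j k" "z \<in> {1..n}" "cyc_ccw i z j"
    and "incircle (p i) (p l) (p j) (p z) < 0"
  shows "p z \<notin> Dreg p i j k"
proof -
  have oz: "orient (p i) (p j) (p z) < 0"
    using orient_neg i_in j_in assms(2,3) by blast
  show ?thesis
  proof (cases "k = 0")
    case True
    with oz show ?thesis
      unfolding Dreg_def by simp
  next
    case False
    then have "k \<in> {1..n}" "cyc_ccw i j k"
      using canonical unfolding canonical_def by auto
    then have ok: "orient (p i) (p j) (p k) > 0"
      using orient_pos i_in j_in by blast
    note l = Pk_memberD[OF assms(1)]
    have "orient (p i) (p j) (p l) < 0"
      using orient_neg i_in j_in l(1,2) by blast
    moreover have "incircle (p i) (p j) (p k) (p l) < 0"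
      using l(3) notin_Dreg_iff[OF False ok] by blast
    ultimately have "incircle (p i) (p j) (p k) (p z) < 0"
      using incircle_nested[OF ok _ oz _ assms(4)] by blast
    then show ?thesis
      using notin_Dreg_iff[OF False ok] by blast
  qed
qed

lemma left_part_memberD:
  assumes "l \<in> Pk n p i j k" "admissible n p i l j S" "x \<in> S"
  shows "x \<in> {1..n}" "cyc_ccw i x l" "incircle (p i) (p l) (p j) (p x) < 0"
    and "dist (p x) (p i) > 1" "dist (p x) (p l) > 1"
  using admissible_memberD[OF assms(2,3)] Pk_memberD[OF assms(1)] i_in j_in by auto

lemma right_part_memberD:
  assumes "l \<in> Pk n p i j k" "admissible n p l j i S" "y \<in> S"
  shows "y \<in> {1..n}" "cyc_ccw l y j" "incircle (p i) (p l) (p j) (p y) < 0"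
    and "dist (p y) (p l) > 1" "dist (p y) (p j) > 1"
proof -
  have "cyc_ccw l j i"
    using Pk_memberD(2)[OF assms(1)] unfolding cyc_ccw_def by auto
  then show "y \<in> {1..n}" "cyc_ccw l y j" "incircle (p i) (p l) (p j) (p y) < 0"
    "dist (p y) (p l) > 1" "dist (p y) (p j) > 1"
    using admissible_memberD[OF assms(2,3)] Pk_memberD[OF assms(1)] i_in j_in incircle_rotate
    by auto
qed

lemma indep_join:
  assumes l: "l \<in> Pk n p i j k" and S1: "admissible n p i l j S1" and S2: "admissible n p l j i S2"
  shows "indep p ((S1 \<union> {i, l}) \<union> (S2 \<union> {l, j}))"
proof (rule indep_Un)
  show "indep p (S1 \<union> {i, l})" "indep p (S2 \<union> {l, j})"
    using S1 S2 unfolding admissible_def by auto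
  note lP = Pk_memberD[OF l] and x = left_part_memberD[OF l S1] and y = right_part_memberD[OF l S2]
  have "cyc_ccw l j i"
    using lP(2) unfolding cyc_ccw_def by auto
  have x_j: "dist (p x) (p j) > 1" if "x \<in> S1" for x
    using far_from_opposite_vertex[of i l j x] x[OF that] lP i_in j_in dist_i_j by auto
  have y_i: "dist (p y) (p i) > 1" if "y \<in> S2" for y
    using far_from_opposite_vertex[of l j i y] y[OF that] lP i_in j_in dist_i_j \<open>cyc_ccw l j i\<close>
      incircle_rotate[of "p l" "p j" "p i"] by (auto simp: dist_commute)
  have x_y: "dist (p x) (p y) > 1" if "x \<in> S1" "y \<in> S2" for x y
    using far_across_vertex[of i l j x y] x[OF that(1)] y[OF that(2)] y_i[OF that(2)] lP i_in j_in
    by auto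
  fix a b
  assume "a \<in> (S1 \<union> {i, l}) - (S2 \<union> {l, j})" "b \<in> (S2 \<union> {l, j}) - (S1 \<union> {i, l})"
  then have "a \<in> S1 \<or> a = i" "b \<in> S2 \<or> b = j"
    by auto
  then show "dist (p a) (p b) > 1"
    using x_j y_i x_y dist_i_j by (auto simp: dist_commute)
qed

lemma admissible_join:
  assumes l: "l \<in> Pk n p i j k" and S1: "admissible n p i l j S1" and S2: "admissible n p l j i S2"
  shows "admissible n p i j k (S1 \<union> S2 \<union> {l})"
  unfolding admissible_def
proof (intro conjI ballI)
  note lP = Pk_memberD[OF l] and x = left_part_memberD[OF l S1] and y = right_part_memberD[OF l S2]
  show "S1 \<union> S2 \<union> {l} \<subseteq> between n i j"
    using between_split[OF lP(1,2)] S1 S2 unfolding admissible_def by blast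
  show "indep p (S1 \<union> S2 \<union> {l} \<union> {i, j})"
    using indep_join[OF assms] by (rule indep_subset) blast
  fix z
  assume "z \<in> S1 \<union> S2 \<union> {l}"
  then consider "z \<in> S1" | "z \<in> S2" | "z = l"
    by blast
  then show "p z \<notin> Dreg p i j k"
  proof cases
    case 1
    then have "cyc_ccw i z j"
      using x(2)[OF 1] lP(2) unfolding cyc_ccw_def by auto
    with 1 show ?thesis
      using notin_Dreg_if_outside_circle[OF l] x by blast
  next
    case 2
    then have "cyc_ccw i z j"
      using y(2)[OF 2] lP(2) unfolding cyc_ccw_def by auto
    with 2 show ?thesis
      using notin_Dreg_if_outside_circle[OF l] y by blast
  next
    case 3
    with lP show ?thesis
      by blast
  qed
qed

lemma fopt_join_le:
  assumes l: "l \<in> Pk n p i j k"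
  shows "fopt n p w i l j + fopt n p w l j i + w l \<le> fopt n p w i j k"
proof -
  note lP = Pk_memberD[OF l]
  obtain S1 where S1: "admissible n p i l j S1" "fopt n p w i l j = sum w S1"
    using fopt_attained[OF lP(4)] by blast
  obtain S2 where S2: "admissible n p l j i S2" "fopt n p w l j i = sum w S2"
    using fopt_attained[OF lP(5)] by blast
  have "S1 \<subseteq> between n i l" "S2 \<subseteq> between n l j"
    using S1(1) S2(1) unfolding admissible_def by auto
  then have "sum w (S1 \<union> S2 \<union> {l}) = sum w S1 + sum w S2 + w l"
    using lP(2) by (rule sum_between_split)
  then have "fopt n p w i l j + fopt n p w l j i + w l = sum w (S1 \<union> S2 \<union> {l})"
    using S1(2) S2(2) by simp
  also have "\<dots> \<le> fopt n p w i j k"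
    by (rule sum_le_fopt[OF dist_i_j admissible_join[OF l S1(1) S2(1)]])
  finally show ?thesis .
qed

lemma admissible_split:
  assumes S: "admissible n p i j k S" and l: "l \<in> S"
    and empty: "\<And>m. m \<in> S \<Longrightarrow> m \<noteq> l \<Longrightarrow> incircle (p i) (p l) (p j) (p m) < 0"
  shows "l \<in> Pk n p i j k" "admissible n p i l j (S \<inter> between n i l)"
    and "admissible n p l j i (S \<inter> between n l j)"
proof -
  have S_sub: "S \<subseteq> between n i j" and S_out: "\<forall>x\<in>S. p x \<notin> Dreg p i j k"
    and S_indep: "indep p (S \<union> {i, j})"
    using S unfolding admissible_def by auto
  have lij: "l \<in> {1..n}" "cyc_ccw i l j"
    using S_sub l between_iff[OF i_neq_j] by blast+
  have "S \<union> {i, j} \<subseteq> {1..n}"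
    using S_sub between_subset i_in j_in by blast
  moreover have "l \<noteq> i" "l \<noteq> j"
    using lij(2) unfolding cyc_ccw_def by auto
  ultimately have "dist (p l) (p i) > 1" "dist (p l) (p j) > 1"
    using indep_dist[OF S_indep] l by auto
  then show "l \<in> Pk n p i j k"
    using S_sub S_out l unfolding Pk_def by blast
  have o_ilj: "orient (p i) (p l) (p j) > 0" and o_lji: "orient (p l) (p j) (p i) > 0"
    using orient_pos[OF i_in lij(1) j_in lij(2)] orient_rotate by auto
  have "j \<noteq> 0" "i \<noteq> 0"
    using i_in j_in by auto
  have outside: "incircle (p i) (p l) (p j) (p x) < 0" if "x \<in> S" "x \<notin> {l}" for x
    using empty that by blast
  have "indep p (S \<inter> between n i l \<union> {i, l})" "indep p (S \<inter> between n l j \<union> {l, j})"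
    by (rule indep_subset[OF S_indep], use l in blast)+
  then show "admissible n p i l j (S \<inter> between n i l)"
    unfolding admissible_def
    using outside between_disjoint(2)[OF lij(2)] notin_Dreg_iff[OF \<open>j \<noteq> 0\<close> o_ilj]
    by (intro conjI ballI) auto
  show "admissible n p l j i (S \<inter> between n l j)"
    unfolding admissible_def
    using \<open>indep p (S \<inter> between n l j \<union> {l, j})\<close> outside between_disjoint(3)[OF lij(2)]
      notin_Dreg_iff[OF \<open>i \<noteq> 0\<close> o_lji] incircle_rotate[of "p l" "p j" "p i"]
    by (intro conjI ballI) auto
qed

lemma sum_le_fopt_join:
  assumes S: "admissible n p i j k S" and "S \<noteq> {}"
  obtains l where "l \<in> Pk n p i j k" "sum w S \<le> fopt n p w i l j + fopt n p w l j i + w l"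
proof -
  have S_sub: "S \<subseteq> between n i j"
    using S unfolding admissible_def by blast
  obtain l where l: "l \<in> S" and empty: "\<And>m. m \<in> S \<Longrightarrow> m \<noteq> l \<Longrightarrow> incircle (p i) (p l) (p j) (p m) < 0"
    using exists_empty_circle[OF i_in j_in i_neq_j S_sub \<open>S \<noteq> {}\<close>] by blast
  note parts = admissible_split[OF S l empty] and lP = Pk_memberD[OF admissible_split(1)[OF S l empty]]
  have "S = (S \<inter> between n i l) \<union> (S \<inter> between n l j) \<union> {l}"
    using between_split[OF lP(1,2)] S_sub l by blast
  then have "sum w S = sum w ((S \<inter> between n i l) \<union> (S \<inter> between n l j) \<union> {l})"
    by (rule arg_cong)
  also have "\<dots> = sum w (S \<inter> between n i l) + sum w (S \<inter> between n l j) + w l"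
    by (rule sum_between_split[OF _ _ lP(2)]) auto
  also have "\<dots> \<le> fopt n p w i l j + fopt n p w l j i + w l"
    using sum_le_fopt[OF lP(4) parts(2)] sum_le_fopt[OF lP(5) parts(3)] by (simp add: add_mono)
  finally show thesis
    using that parts(1) by blast
qed

lemma fopt_eq_0_if_Pk_empty:
  assumes "Pk n p i j k = {}"
  shows "fopt n p w i j k = 0"
proof -
  obtain S where S: "admissible n p i j k S" and opt: "fopt n p w i j k = sum w S"
    using fopt_attained[OF dist_i_j] by blast
  have "S = {}"
    using sum_le_fopt_join[OF S] assms by blast
  with opt show ?thesis
    by simp
qed

lemma fopt_eq_Max_join:
  assumes "Pk n p i j k \<noteq> {}" and w: "\<forall>m\<in>{1..n}. w m \<ge> 0"
  shows "fopt n p w i j k = Max ((\<lambda>l. fopt n p w i l j + fopt n p w l j i + w l) ` Pk n p i j k)"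
    (is "_ = Max (?F ` _)")
proof -
  obtain S where S: "admissible n p i j k S" and opt: "fopt n p w i j k = sum w S"
    using fopt_attained[OF dist_i_j] by blast
  have "\<exists>l\<in>Pk n p i j k. fopt n p w i j k \<le> ?F l"
  proof (cases "S = {}")
    case True
    obtain l where l: "l \<in> Pk n p i j k"
      using assms(1) by blast
    have "0 \<le> fopt n p w i l j" "0 \<le> fopt n p w l j i" "0 \<le> w l"
      using fopt_nonneg Pk_memberD(1,4,5)[OF l] w by auto
    with True opt show ?thesis
      by (intro bexI[OF _ l]) simp
  next
    case False
    with sum_le_fopt_join[OF S] opt show ?thesis
      by metis
  qed
  moreover have "?F l \<le> fopt n p w i j k" if "l \<in> Pk n p i j k" for l
    using fopt_join_le[OF that] .
  ultimately show ?thesis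
    using finite_Pk assms(1) by (intro antisym) (auto simp: Max_le_iff Max_ge_iff)
qed

end

theorem lemma20:
  fixes n :: nat and p :: "nat \<Rightarrow> complex" and w :: "nat \<Rightarrow> real" and i j k :: nat
  assumes "good_config n p"
    and "\<forall>m\<in>{1..n}. w m > 0"
    and "canonical n p i j k"
  shows "fopt n p w i j k =
           (if Pk n p i j k \<noteq> {}
            then Max ((\<lambda>l. fopt n p w i l j + fopt n p w l j i + w l) ` Pk n p i j k)
            else 0)"
proof -
  interpret canonical_triple n p i j k
    using assms(1,3) by unfold_locales
  have "\<forall>m\<in>{1..n}. w m \<ge> 0"
    using assms(2) by auto
  then show ?thesis
    using fopt_eq_Max_join fopt_eq_0_if_Pk_empty by simp
qed

end
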